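(* Let $\mathcal S$ be any set of collections $S=\{(y_d^1,\pi^1),\dots,(y_d^k,\pi^k)\}$ (with $y_d^t$ distinct elements of $\mathbb Y_d$ and $\pi^t\in\mathcal P_\Pi\cup\mathcal R_\Pi$). The program $\min\ c_1x+\eta$ subject to $x\in\mathcal X$ and, for each $S\in\mathcal S$, variables $y_c^S\ge0$, $y_d^S\in\mathbb Y_d$, $u^S$ with $\eta\ge c_{2,c}y_c^S+c_{2,d}y_d^S$, $B_{2,c}y_c^S+B_{2,d}y_d^S+Eu^S\ge d-B_1x$, $(u^S,\cdot)\in\mathcal{OU}(x,S)$, is a relaxation of the two-stage robust problem, and its optimal value is at most $w^*$.
   Context: $\mathcal X=\{x\in\mathbb R^{n_x}_+\times\mathbb Z^{m_x}_+: Ax\ge b\}$; $\mathcal U(x)=\{u\in\mathbb R^{n_u}_+: F(x)u\le h+Gx\}$, nonempty and bounded for $x\in\mathcal X$; $\mathcal Y(x,u)=\{(y_c,y_d)\in\mathbb R^{n_y}_+\times\mathbb Y_d: B_{2,c}y_c+B_{2,d}y_d\ge d-B_1x-Eu\}$, $\mathbb Y_d\subseteq\mathbb Z^{m_y}_+$ finite; $w^*=\min_{x\in\mathcal X}\big[c_1x+\max_{u\in\mathcal U(x)}\min_{(y_c,y_d)\in\mathcal Y(x,u)}(c_{2,c}y_c+c_{2,d}y_d)\big]$ (minimum over empty set $=+\infty$); standing assumption $\min\{c_1x+c_{2,c}y_c+c_{2,d}y_d: x\in\mathcal X,u\in\mathcal U(x),(y_c,y_d)\in\mathcal Y(x,u)\}>-\infty$.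 $\Pi=\{\pi\ge0: B_{2,c}^\intercal\pi\le c_{2,c}^\intercal\}$ with extreme points $\mathcal P_\Pi$ and extreme rays $\mathcal R_\Pi$. For $S=\{(y_d^t,\pi^t)\}_{t=1}^k$, $\mathcal{OU}(x,S)$ is the set of $(u,\hat\eta,\lambda,\mu)$ with: $\hat\eta\le c_{2,d}y_d^t+(d-B_1x-Eu-B_{2,d}y_d^t)^\intercal\pi^t$ ($\forall t$); $F(x)u\le h+Gx$; $F(x)^\intercal\lambda+\sum_tE^\intercal\pi^t\mu^t\ge0$; $\sum_t\mu^t=1$; $\mu^t(c_{2,d}y_d^t+(d-B_1x-Eu-B_{2,d}y_d^t)^\intercal\pi^t-\hat\eta)=0$ ($\forall t$); $\lambda\circ(h+Gx-F(x)u)=0$; $u\circ(F(x)^\intercal\lambda+\sum_tE^\intercal\pi^t\mu^t)=0$; $u,\lambda,\mu\ge0$ ($\circ$ componentwise product). *)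

theory Defs
  imports "HOL-Analysis.Analysis"
begin

definition vle :: "real^'n \<Rightarrow> real^'n \<Rightarrow> bool" where
  "vle v w \<longleftrightarrow> (\<forall>i. v$i \<le> w$i)"

definition Xset :: "real^'x^'mA \<Rightarrow> real^'mA \<Rightarrow> 'x set \<Rightarrow> (real^'x) set" where
  "Xset A b Ix = {x. vle 0 x \<and> (\<forall>i\<in>Ix. x$i \<in> \<int>) \<and> vle b (A *v x)}"

definition Uset :: "(real^'x \<Rightarrow> real^'u^'mF) \<Rightarrow> real^'mF \<Rightarrow> real^'x^'mF \<Rightarrow> real^'x \<Rightarrow> (real^'u) set" where
  "Uset F h G x = {u. vle 0 u \<and> vle (F x *v u) (h + G *v x)}"

definition Yset :: "real^'yc^'m2 \<Rightarrow> real^'yd^'m2 \<Rightarrow> (real^'yd) set \<Rightarrow> real^'m2 \<Rightarrow> real^'x^'m2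
    \<Rightarrow> real^'u^'m2 \<Rightarrow> real^'x \<Rightarrow> real^'u \<Rightarrow> ((real^'yc) \<times> (real^'yd)) set" where
  "Yset B2c B2d Yd d B1 E x u =
     {(yc, yd). vle 0 yc \<and> yd \<in> Yd \<and> vle (d - B1 *v x - E *v u) (B2c *v yc + B2d *v yd)}"

text \<open>Second-stage value max_u min_y (min over empty set = +infinity).\<close>
definition second_stage :: "(real^'x \<Rightarrow> real^'u^'mF) \<Rightarrow> real^'mF \<Rightarrow> real^'x^'mF
    \<Rightarrow> real^'yc^'m2 \<Rightarrow> real^'yd^'m2 \<Rightarrow> (real^'yd) set \<Rightarrow> real^'m2 \<Rightarrow> real^'x^'m2 \<Rightarrow> real^'u^'m2
    \<Rightarrow> real^'yc \<Rightarrow> real^'yd \<Rightarrow> real^'x \<Rightarrow> ereal" where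
  "second_stage F h G B2c B2d Yd d B1 E c2c c2d x =
     (SUP u\<in>Uset F h G x. INF yy\<in>Yset B2c B2d Yd d B1 E x u.
        ereal (c2c \<bullet> fst yy + c2d \<bullet> snd yy))"

definition wstar :: "real^'x^'mA \<Rightarrow> real^'mA \<Rightarrow> 'x set \<Rightarrow> real^'x
    \<Rightarrow> (real^'x \<Rightarrow> real^'u^'mF) \<Rightarrow> real^'mF \<Rightarrow> real^'x^'mF
    \<Rightarrow> real^'yc^'m2 \<Rightarrow> real^'yd^'m2 \<Rightarrow> (real^'yd) set \<Rightarrow> real^'m2 \<Rightarrow> real^'x^'m2 \<Rightarrow> real^'u^'m2
    \<Rightarrow> real^'yc \<Rightarrow> real^'yd \<Rightarrow> ereal" where
  "wstar A b Ix c1 F h G B2c B2d Yd d B1 E c2c c2d =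
     (INF x\<in>Xset A b Ix. ereal (c1 \<bullet> x) + second_stage F h G B2c B2d Yd d B1 E c2c c2d x)"

definition PiSet :: "real^'yc^'m2 \<Rightarrow> real^'yc \<Rightarrow> (real^'m2) set" where
  "PiSet B2c c2c = {p. vle 0 p \<and> vle (transpose B2c *v p) c2c}"

definition rec_cone :: "('a::real_vector) set \<Rightarrow> 'a set" where
  "rec_cone S = {r. \<forall>x\<in>S. \<forall>t\<ge>0. x + t *\<^sub>R r \<in> S}"

definition extreme_ray_of :: "('a::real_vector) \<Rightarrow> 'a set \<Rightarrow> bool" where
  "extreme_ray_of r S \<longleftrightarrow> r \<in> rec_cone S \<and> r \<noteq> 0 \<and>
     (\<forall>a\<in>rec_cone S. \<forall>b\<in>rec_cone S. a + b = r \<longrightarrow> (\<exists>t\<ge>0. a = t *\<^sub>R r))"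

definition admissible_coll :: "(real^'yd) set \<Rightarrow> real^'yc^'m2 \<Rightarrow> real^'yc
    \<Rightarrow> ((real^'yd) \<times> (real^'m2)) list \<Rightarrow> bool" where
  "admissible_coll Yd B2c c2c S \<longleftrightarrow> S \<noteq> [] \<and> distinct (map fst S) \<and>
     (\<forall>(y, p)\<in>set S. y \<in> Yd \<and>
        (p extreme_point_of PiSet B2c c2c \<or> extreme_ray_of p (PiSet B2c c2c)))"

text \<open>The set OU(x,S) of tuples (u, eta_hat, lambda, mu); mu t is the multiplier mu^{t+1}.\<close>
definition OUset :: "(real^'x \<Rightarrow> real^'u^'mF) \<Rightarrow> real^'mF \<Rightarrow> real^'x^'mF
    \<Rightarrow> real^'yd^'m2 \<Rightarrow> real^'m2 \<Rightarrow> real^'x^'m2 \<Rightarrow> real^'u^'m2 \<Rightarrow> real^'yd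
    \<Rightarrow> real^'x \<Rightarrow> ((real^'yd) \<times> (real^'m2)) list
    \<Rightarrow> ((real^'u) \<times> real \<times> (real^'mF) \<times> (nat \<Rightarrow> real)) set" where
  "OUset F h G B2d d B1 E c2d x S =
     {(u, eh, lam, mu).
        let val = (\<lambda>t. c2d \<bullet> fst (S!t) + (d - B1 *v x - E *v u - B2d *v fst (S!t)) \<bullet> snd (S!t));
            red = transpose (F x) *v lam + (\<Sum>t<length S. mu t *\<^sub>R (transpose E *v snd (S!t)))
        in (\<forall>t<length S. eh \<le> val t)
         \<and> vle (F x *v u) (h + G *v x)
         \<and> vle 0 red
         \<and> (\<Sum>t<length S. mu t) = 1
         \<and> (\<forall>t<length S. mu t * (val t - eh) = 0)
         \<and> (\<forall>i. lam$i * (h + G *v x - F x *v u)$i = 0)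
         \<and> (\<forall>j. u$j * red$j = 0)
         \<and> vle 0 u \<and> vle 0 lam \<and> (\<forall>t<length S. 0 \<le> mu t)}"

definition relax_feasible :: "real^'x^'mA \<Rightarrow> real^'mA \<Rightarrow> 'x set
    \<Rightarrow> (real^'x \<Rightarrow> real^'u^'mF) \<Rightarrow> real^'mF \<Rightarrow> real^'x^'mF
    \<Rightarrow> real^'yc^'m2 \<Rightarrow> real^'yd^'m2 \<Rightarrow> (real^'yd) set \<Rightarrow> real^'m2 \<Rightarrow> real^'x^'m2 \<Rightarrow> real^'u^'m2
    \<Rightarrow> real^'yc \<Rightarrow> real^'yd \<Rightarrow> (((real^'yd) \<times> (real^'m2)) list) set \<Rightarrow> real^'x \<Rightarrow> real \<Rightarrow> bool" where
  "relax_feasible A b Ix F h G B2c B2d Yd d B1 E c2c c2d SS x eta \<longleftrightarrow>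
     x \<in> Xset A b Ix \<and>
     (\<forall>S\<in>SS. \<exists>yc yd u eh lam mu.
        vle 0 yc \<and> yd \<in> Yd \<and> c2c \<bullet> yc + c2d \<bullet> yd \<le> eta \<and>
        vle (d - B1 *v x) (B2c *v yc + B2d *v yd + E *v u) \<and>
        (u, eh, lam, mu) \<in> OUset F h G B2d d B1 E c2d x S)"

definition relax_value :: "real^'x^'mA \<Rightarrow> real^'mA \<Rightarrow> 'x set \<Rightarrow> real^'x
    \<Rightarrow> (real^'x \<Rightarrow> real^'u^'mF) \<Rightarrow> real^'mF \<Rightarrow> real^'x^'mF
    \<Rightarrow> real^'yc^'m2 \<Rightarrow> real^'yd^'m2 \<Rightarrow> (real^'yd) set \<Rightarrow> real^'m2 \<Rightarrow> real^'x^'m2 \<Rightarrow> real^'u^'m2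
    \<Rightarrow> real^'yc \<Rightarrow> real^'yd \<Rightarrow> (((real^'yd) \<times> (real^'m2)) list) set \<Rightarrow> ereal" where
  "relax_value A b Ix c1 F h G B2c B2d Yd d B1 E c2c c2d SS =
     Inf {ereal (c1 \<bullet> x + eta) | x eta.
            relax_feasible A b Ix F h G B2c B2d Yd d B1 E c2c c2d SS x eta}"

end

theory Submission
  imports Defs
begin

text \<open>
  Fix a feasible first-stage decision \<open>x\<close> and a real bound \<open>\<eta>\<close> on its second-stage value.
  For a collection \<open>S\<close>, maximize over the polytope \<open>U(x)\<close> the concave function
  \<open>u \<mapsto> min\<^sub>t (c2d y\<^sub>t + (d - B1 x - E u - B2d y\<^sub>t) \<bullet> \<pi>\<^sub>t)\<close>. A maximizer together with
  suitable multipliers lies in \<open>OU(x, S)\<close>: the KKT system is a cone membership, and its Farkas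
  alternative would be a feasible ascent direction. Since \<open>\<eta>\<close> bounds the recourse value at
  every point of \<open>U(x)\<close>, the recourse problem at this \<open>u\<close> is feasible, and the standing
  assumption bounds it below. As the discrete part ranges over a finite set and a bounded
  linear program attains its infimum (a linear image of an orthant is closed), an optimal
  recourse exists, of cost at most \<open>\<eta>\<close>. So \<open>(x, \<eta>)\<close> is feasible for the relaxation, and
  taking infima bounds its value by \<open>w*\<close>.
\<close>

section \<open>Finitely generated cones and Farkas' lemma\<close>

definition generated_cone :: "'i set \<Rightarrow> ('i \<Rightarrow> 'a::real_vector) \<Rightarrow> 'a set" where
  "generated_cone I v = {\<Sum>i\<in>I. c i *\<^sub>R v i | c. \<forall>i\<in>I. 0 \<le> c i}"

lemma convex_cone_sum:
  assumes "convex_cone K" "\<And>i. i \<in> I \<Longrightarrow> f i \<in> K"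
  shows "sum f I \<in> K"
  using assms(2)
  by (induction I rule: infinite_finite_induct)
    (auto simp: convex_cone_contains_0[OF assms(1)] convex_cone_add[OF assms(1)])

lemma convex_cone_generated_cone: "convex_cone (generated_cone I v)"
  unfolding convex_cone_iff
proof (intro conjI ballI allI impI)
  show "0 \<in> generated_cone I v"
    unfolding generated_cone_def by (auto intro!: exI[of _ "\<lambda>_. 0"])
next
  fix x y assume "x \<in> generated_cone I v" "y \<in> generated_cone I v"
  then obtain c d where "x = (\<Sum>i\<in>I. c i *\<^sub>R v i)" "\<forall>i\<in>I. 0 \<le> c i"
    and "y = (\<Sum>i\<in>I. d i *\<^sub>R v i)" "\<forall>i\<in>I. 0 \<le> d i"
    unfolding generated_cone_def by blast
  then show "x + y \<in> generated_cone I v"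
    unfolding generated_cone_def
    by (auto simp: scaleR_add_left sum.distrib intro!: exI[of _ "\<lambda>i. c i + d i"])
next
  fix x and t :: real assume "x \<in> generated_cone I v" "0 \<le> t"
  then obtain c where "x = (\<Sum>i\<in>I. c i *\<^sub>R v i)" "\<forall>i\<in>I. 0 \<le> c i"
    unfolding generated_cone_def by blast
  with \<open>0 \<le> t\<close> show "t *\<^sub>R x \<in> generated_cone I v"
    unfolding generated_cone_def by (auto simp: scaleR_sum_right intro!: exI[of _ "\<lambda>i. t * c i"])
qed

lemma generator_in_generated_cone:
  assumes "finite I" "j \<in> I"
  shows "v j \<in> generated_cone I v"
proof -
  have "(\<Sum>i\<in>I. (if i = j then 1 else 0) *\<^sub>R v i) = v j"
    using assms by (simp add: if_distrib[of "\<lambda>c. c *\<^sub>R _"] cong: if_cong)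
  then show ?thesis
    unfolding generated_cone_def by (auto intro!: exI[of _ "\<lambda>i. if i = j then 1 else 0"])
qed

lemma generated_cone_eq_convex_cone_hull:
  assumes "finite I"
  shows "generated_cone I v = convex_cone hull (v ` I)"
proof
  show "generated_cone I v \<subseteq> convex_cone hull (v ` I)"
  proof
    fix x assume "x \<in> generated_cone I v"
    then obtain c where x: "x = (\<Sum>i\<in>I. c i *\<^sub>R v i)" and c: "\<forall>i\<in>I. 0 \<le> c i"
      unfolding generated_cone_def by blast
    show "x \<in> convex_cone hull (v ` I)"
      unfolding x using c
      by (intro convex_cone_sum convex_cone_convex_cone_hull)
        (simp add: convex_cone_hull_mul hull_inc)
  qed
  show "convex_cone hull (v ` I) \<subseteq> generated_cone I v"
    using assms by (intro hull_minimal convex_cone_generated_cone) (auto intro: generator_in_generated_cone)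
qed

lemma farkas_generated_cone:
  fixes v :: "'i \<Rightarrow> 'a::euclidean_space"
  assumes "finite I" "b \<notin> generated_cone I v"
  shows "\<exists>z. (\<forall>i\<in>I. z \<bullet> v i \<le> 0) \<and> 0 < z \<bullet> b"
proof -
  let ?K = "generated_cone I v"
  have "closed ?K" "convex ?K"
    using assms(1) by (simp_all add: generated_cone_eq_convex_cone_hull closed_convex_cone_hull
        convex_convex_cone_hull)
  then obtain a t where sep: "a \<bullet> b < t" "\<forall>x\<in>?K. t < a \<bullet> x"
    using separating_hyperplane_closed_point assms(2) by blast
  have "0 \<in> ?K" by (rule convex_cone_contains_0[OF convex_cone_generated_cone])
  with sep have "t < 0" by auto
  have "0 \<le> a \<bullet> v i" if "i \<in> I" for i
  proof (rule ccontr)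
    assume neg: "\<not> 0 \<le> a \<bullet> v i"
    have "(t / (a \<bullet> v i)) *\<^sub>R v i \<in> ?K"
      using generator_in_generated_cone[OF assms(1) that] neg \<open>t < 0\<close>
      by (intro convex_cone_scaleR[OF convex_cone_generated_cone]) (auto simp: divide_nonpos_neg)
    with sep neg show False by auto
  qed
  with sep \<open>t < 0\<close> show ?thesis by (intro exI[of _ "-a"]) auto
qed

section \<open>Attainment in linear programs\<close>

lemma nonneg_orthant_eq_convex_cone_hull:
  "{x::'a::euclidean_space. \<forall>i\<in>Basis. 0 \<le> x \<bullet> i} = convex_cone hull Basis"
proof
  show "{x::'a. \<forall>i\<in>Basis. 0 \<le> x \<bullet> i} \<subseteq> convex_cone hull Basis"
  proof
    fix x :: 'a assume "x \<in> {x. \<forall>i\<in>Basis. 0 \<le> x \<bullet> i}"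
    then have "(\<Sum>i\<in>Basis. (x \<bullet> i) *\<^sub>R i) \<in> convex_cone hull Basis"
      by (intro convex_cone_sum convex_cone_convex_cone_hull) (simp add: convex_cone_hull_mul hull_inc)
    then show "x \<in> convex_cone hull Basis" by (simp add: euclidean_representation)
  qed
  have "convex_cone {x::'a. \<forall>i\<in>Basis. 0 \<le> x \<bullet> i}"
    by (auto simp: convex_cone_iff inner_add_left)
  then show "convex_cone hull Basis \<subseteq> {x::'a. \<forall>i\<in>Basis. 0 \<le> x \<bullet> i}"
    by (intro hull_minimal) (auto simp: inner_Basis)
qed

lemma closed_linear_image_nonneg_orthant:
  fixes L :: "'a::euclidean_space \<Rightarrow> 'b::euclidean_space"
  assumes "linear L"
  shows "closed (L ` {x. \<forall>i\<in>Basis. 0 \<le> x \<bullet> i})"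
  by (simp add: nonneg_orthant_eq_convex_cone_hull closed_convex_cone_hull
      flip: convex_cone_hull_linear_image[OF assms])

lemma nonneg_orthant_vec_iff: "(\<forall>i\<in>Basis. 0 \<le> (y::real^'n) \<bullet> i) \<longleftrightarrow> vle 0 y"
  by (auto simp: vle_def Basis_vec_def inner_axis)

lemma nonneg_orthant_triple_iff:
  "(\<forall>i\<in>Basis. 0 \<le> ((y, s, z) :: (real^'n) \<times> real \<times> (real^'m)) \<bullet> i) \<longleftrightarrow>
     vle 0 y \<and> 0 \<le> s \<and> vle 0 z"
  by (auto simp: Basis_prod_def inner_Pair ball_Un simp flip: nonneg_orthant_vec_iff)

lemma closed_lp_cost_rhs_set:
  fixes B :: "real^'n^'m" and c :: "real^'n"
  shows "closed {(t, w). \<exists>y. vle 0 y \<and> c \<bullet> y \<le> t \<and> vle w (B *v y)}"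
proof -
  let ?D = "{(t, w). \<exists>y. vle 0 y \<and> c \<bullet> y \<le> t \<and> vle w (B *v y)}"
  define f where "f = (\<lambda>(y::real^'n, s::real, z::real^'m). (c \<bullet> y + s, B *v y - z))"
  have "linear f"
    unfolding f_def linear_iff
    by (auto simp: inner_add_right matrix_vector_right_distrib matrix_vector_mult_scaleR
        algebra_simps)
  moreover have "?D = f ` {p. \<forall>i\<in>Basis. 0 \<le> p \<bullet> i}"
  proof
    show "?D \<subseteq> f ` {p. \<forall>i\<in>Basis. 0 \<le> p \<bullet> i}"
    proof clarify
      fix t w y assume "vle 0 y" "c \<bullet> y \<le> t" "vle w (B *v y)"
      then show "(t, w) \<in> f ` {p. \<forall>i\<in>Basis. 0 \<le> p \<bullet> i}"
        unfolding f_def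
        by (intro image_eqI[of _ _ "(y, t - c \<bullet> y, B *v y - w)"])
          (auto simp: nonneg_orthant_triple_iff vle_def)
    qed
    show "f ` {p. \<forall>i\<in>Basis. 0 \<le> p \<bullet> i} \<subseteq> ?D"
      unfolding f_def by (force simp: nonneg_orthant_triple_iff vle_def)
  qed
  ultimately show ?thesis by (simp add: closed_linear_image_nonneg_orthant)
qed

lemma lp_attains_min:
  fixes B :: "real^'n^'m" and r :: "real^'m" and c :: "real^'n"
  assumes feasible: "\<exists>y. vle 0 y \<and> vle r (B *v y)"
    and bounded: "\<And>y. vle 0 y \<Longrightarrow> vle r (B *v y) \<Longrightarrow> L \<le> c \<bullet> y"
  shows "\<exists>y. vle 0 y \<and> vle r (B *v y) \<and>
           (\<forall>y'. vle 0 y' \<and> vle r (B *v y') \<longrightarrow> c \<bullet> y \<le> c \<bullet> y')"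
proof -
  define D where "D = {(t, w). \<exists>y. vle 0 y \<and> c \<bullet> y \<le> t \<and> vle w (B *v y)}"
  have "closed D"
    unfolding D_def by (rule closed_lp_cost_rhs_set)
  define m where "m = Inf {c \<bullet> y | y. vle 0 y \<and> vle r (B *v y)}"
  have "(m + inverse (real (Suc k)), r) \<in> D" for k
  proof -
    have "\<exists>z\<in>{c \<bullet> y | y. vle 0 y \<and> vle r (B *v y)}. z < m + inverse (real (Suc k))"
      unfolding m_def using feasible by (intro cInf_lessD) auto
    then show ?thesis unfolding D_def by (auto simp: vle_def)
  qed
  moreover have "(\<lambda>k. (m + inverse (real (Suc k)), r)) \<longlonglongrightarrow> (m, r)"
    using tendsto_add[OF tendsto_const LIMSEQ_inverse_real_of_nat]
    by (intro tendsto_Pair tendsto_const) simp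
  ultimately have "(m, r) \<in> D"
    by (rule closed_sequentially[OF \<open>closed D\<close>])
  then obtain y where y: "vle 0 y" "c \<bullet> y \<le> m" "vle r (B *v y)"
    unfolding D_def by auto
  have "m \<le> c \<bullet> y'" if "vle 0 y'" "vle r (B *v y')" for y'
    unfolding m_def using that bounded by (intro cInf_lower) (auto simp: bdd_below_def)
  with y show ?thesis by force
qed

section \<open>KKT conditions for maximizing a minimum of affine functions\<close>

definition nonneg_polyhedron :: "real^'n^'m \<Rightarrow> real^'m \<Rightarrow> (real^'n) set" where
  "nonneg_polyhedron M g = {u. vle 0 u \<and> vle (M *v u) g}"

definition min_affine :: "nat \<Rightarrow> (nat \<Rightarrow> real) \<Rightarrow> (nat \<Rightarrow> real^'n) \<Rightarrow> real^'n \<Rightarrow> real" where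
  "min_affine n k a u = Min ((\<lambda>t. k t - a t \<bullet> u) ` {..<n})"

lemma compact_nonneg_polyhedron:
  assumes "bounded (nonneg_polyhedron M g)"
  shows "compact (nonneg_polyhedron M g)"
proof -
  have "closed (nonneg_polyhedron M g)"
    unfolding nonneg_polyhedron_def vle_def Collect_conj_eq
    by (intro closed_Int closed_Collect_all closed_Collect_le continuous_intros
        linear_continuous_on matrix_vector_mul_linear)
  with assms show ?thesis by (simp add: compact_eq_bounded_closed)
qed

lemma continuous_on_Min_finite:
  fixes f :: "'i \<Rightarrow> 'a::topological_space \<Rightarrow> 'b::linorder_topology"
  assumes "finite A" "A \<noteq> {}" "\<And>t. t \<in> A \<Longrightarrow> continuous_on S (f t)"
  shows "continuous_on S (\<lambda>u. Min ((\<lambda>t. f t u) ` A))"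
  using assms
proof (induction A rule: finite_ne_induct)
  case (insert t A)
  then show ?case by (simp add: continuous_on_min)
qed simp

lemma continuous_on_min_affine: "0 < n \<Longrightarrow> continuous_on S (min_affine n k a)"
  unfolding min_affine_def by (intro continuous_on_Min_finite continuous_intros) auto

lemma eventually_at_right_affine_pos:
  fixes \<alpha> \<beta> :: real
  assumes "0 \<le> \<alpha>" "\<alpha> = 0 \<Longrightarrow> 0 < \<beta>"
  shows "\<forall>\<^sub>F \<epsilon> in at_right 0. 0 < \<alpha> + \<epsilon> * \<beta>"
proof (cases "\<alpha> = 0")
  case True
  with assms(2) show ?thesis
    by (auto intro: eventually_mono[OF eventually_at_right_less])
next
  case False
  have "((\<lambda>\<epsilon>. \<alpha> + \<epsilon> * \<beta>) \<longlongrightarrow> \<alpha>) (at_right 0)"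
    by (auto intro!: tendsto_eq_intros)
  with False assms(1) show ?thesis
    by (auto dest: order_tendstoD(1)[of _ _ _ 0])
qed

lemma eventually_at_right_affine_nonneg:
  fixes \<alpha> \<beta> :: real
  assumes "0 \<le> \<alpha>" "\<alpha> = 0 \<Longrightarrow> 0 \<le> \<beta>"
  shows "\<forall>\<^sub>F \<epsilon> in at_right 0. 0 \<le> \<alpha> + \<epsilon> * \<beta>"
proof (cases "\<alpha> = 0")
  case True
  with assms(2) show ?thesis
    by (auto intro: eventually_mono[OF eventually_at_right_less])
next
  case False
  with assms(1) have "\<forall>\<^sub>F \<epsilon> in at_right 0. 0 < \<alpha> + \<epsilon> * \<beta>"
    by (intro eventually_at_right_affine_pos) auto
  then show ?thesis by (rule eventually_mono) simp
qed

lemma min_affine_le: "t < n \<Longrightarrow> min_affine n k a u \<le> k t - a t \<bullet> u"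
  unfolding min_affine_def by (intro Min_le) auto

lemma no_ascent_direction:
  fixes M :: "real^'n^'m" and a :: "nat \<Rightarrow> real^'n"
  assumes "0 < n" and us: "us \<in> nonneg_polyhedron M g"
    and max: "\<And>u. u \<in> nonneg_polyhedron M g \<Longrightarrow> min_affine n k a u \<le> min_affine n k a us"
    and active_pieces: "\<And>t. t < n \<Longrightarrow> k t - a t \<bullet> us = min_affine n k a us \<Longrightarrow> a t \<bullet> w < 0"
    and active_rows: "\<And>i. (M *v us)$i = g$i \<Longrightarrow> (M *v w)$i \<le> 0"
    and active_bounds: "\<And>j. us$j = 0 \<Longrightarrow> 0 \<le> w$j"
  shows False
proof -
  let ?m = "min_affine n k a us"
  have "\<forall>\<^sub>F \<epsilon> in at_right 0. \<forall>t\<in>{..<n}. 0 < (k t - a t \<bullet> us - ?m) + \<epsilon> * - (a t \<bullet> w)"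
    using min_affine_le[of _ n k a us] active_pieces
    by (intro eventually_ball_finite ballI eventually_at_right_affine_pos) auto
  moreover have "\<forall>\<^sub>F \<epsilon> in at_right 0. \<forall>j. 0 \<le> us$j + \<epsilon> * w$j"
    using us active_bounds unfolding nonneg_polyhedron_def vle_def
    by (intro eventually_all_finite eventually_at_right_affine_nonneg) auto
  moreover have "\<forall>\<^sub>F \<epsilon> in at_right 0. \<forall>i. 0 \<le> (g - M *v us)$i + \<epsilon> * - (M *v w)$i"
    using us active_rows unfolding nonneg_polyhedron_def vle_def
    by (intro eventually_all_finite eventually_at_right_affine_nonneg) auto
  ultimately have "\<forall>\<^sub>F \<epsilon> in at_right 0.
      (\<forall>t\<in>{..<n}. 0 < (k t - a t \<bullet> us - ?m) + \<epsilon> * - (a t \<bullet> w)) \<and>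
      (\<forall>j. 0 \<le> us$j + \<epsilon> * w$j) \<and> (\<forall>i. 0 \<le> (g - M *v us)$i + \<epsilon> * - (M *v w)$i)"
    by (intro eventually_conj)
  from eventually_happens'[OF _ this] obtain \<epsilon> where
    pieces: "\<forall>t\<in>{..<n}. 0 < (k t - a t \<bullet> us - ?m) + \<epsilon> * - (a t \<bullet> w)" and
    bounds: "\<forall>j. 0 \<le> us$j + \<epsilon> * w$j" and
    rows: "\<forall>i. 0 \<le> (g - M *v us)$i + \<epsilon> * - (M *v w)$i"
    by auto
  define u where "u = us + \<epsilon> *\<^sub>R w"
  have "u$j = us$j + \<epsilon> * w$j" for j
    by (simp add: u_def)
  moreover have "(M *v u)$i = (M *v us)$i + \<epsilon> * (M *v w)$i" for i
    by (simp add: u_def matrix_vector_right_distrib matrix_vector_mult_scaleR)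
  ultimately have "u \<in> nonneg_polyhedron M g"
    using bounds rows by (simp add: nonneg_polyhedron_def vle_def add.commute le_diff_eq)
  moreover have "a t \<bullet> u = a t \<bullet> us + \<epsilon> * (a t \<bullet> w)" for t
    by (simp add: u_def inner_add_right)
  then have "?m < min_affine n k a u"
    unfolding min_affine_def[of n k a u] using \<open>0 < n\<close> pieces
    by (subst Min_gr_iff) (auto simp: algebra_simps)
  ultimately show False using max by fastforce
qed

text \<open>
  Restricted to the active pieces \<open>t\<close>, active rows \<open>i\<close> and active bounds \<open>j\<close> of a point \<open>u\<close>,
  the vector \<open>(1, 0)\<close> lies in the cone generated by these vectors exactly when the KKT system
  at \<open>u\<close> has a solution; a separating \<open>(z\<^sub>0, w)\<close> makes \<open>w\<close> an ascent direction.
\<close>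
definition kkt_generators ::
    "(nat \<Rightarrow> real^'n) \<Rightarrow> real^'n^'m \<Rightarrow> nat + ('m + 'n) \<Rightarrow> real \<times> (real^'n)" where
  "kkt_generators a M =
     case_sum (\<lambda>t. (1, a t)) (case_sum (\<lambda>i. (0, M$i)) (\<lambda>j. (0, - axis j 1)))"

lemma transpose_mult_vec_eq_sum_rows:
  "transpose (M::real^'n^'m) *v v = (\<Sum>i\<in>UNIV. v$i *\<^sub>R M$i)"
  by (simp add: vec_eq_iff vector_matrix_mult_def sum_component)

lemma multipliers_of_kkt_cone:
  fixes M :: "real^'n^'m" and a :: "nat \<Rightarrow> real^'n"
  assumes cone: "(1, 0) \<in> generated_cone (T <+> (I <+> J)) (kkt_generators a M)" and "T \<subseteq> {..<n}"
  defines "red mu lam \<equiv> transpose M *v lam + (\<Sum>t<n. mu t *\<^sub>R a t)"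
  shows "\<exists>mu lam. (\<Sum>t<n. mu t) = 1 \<and> (\<forall>t. 0 \<le> mu t \<and> (t \<notin> T \<longrightarrow> mu t = 0)) \<and>
           vle 0 lam \<and> (\<forall>i. i \<notin> I \<longrightarrow> lam$i = 0) \<and>
           vle 0 (red mu lam) \<and> (\<forall>j. j \<notin> J \<longrightarrow> red mu lam $ j = 0)"
proof -
  have "finite T" using \<open>T \<subseteq> {..<n}\<close> finite_subset by blast
  obtain c where c: "\<forall>i\<in>T <+> (I <+> J). 0 \<le> c i"
    and sum: "(\<Sum>i\<in>T <+> (I <+> J). c i *\<^sub>R kkt_generators a M i) = (1, 0)"
    using cone unfolding generated_cone_def by auto
  define mu where "mu t = (if t \<in> T then c (Inl t) else 0)" for t
  define lam :: "real^'m" where "lam = (\<chi> i. if i \<in> I then c (Inr (Inl i)) else 0)"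
  define nu :: "real^'n" where "nu = (\<chi> j. if j \<in> J then c (Inr (Inr j)) else 0)"
  have mu_sum: "(\<Sum>t<n. f t (mu t)) = (\<Sum>t\<in>T. f t (c (Inl t)))"
    if "\<And>t. f t 0 = 0" for f :: "nat \<Rightarrow> real \<Rightarrow> 'b::comm_monoid_add"
    using \<open>T \<subseteq> {..<n}\<close> that unfolding mu_def
    by (subst sum.mono_neutral_right[of "{..<n}" T]) auto
  have "transpose M *v lam = (\<Sum>i\<in>I. c (Inr (Inl i)) *\<^sub>R M$i)"
    unfolding transpose_mult_vec_eq_sum_rows lam_def
    by (simp add: if_distrib[of "\<lambda>x. x *\<^sub>R _"] sum.If_cases)
  moreover have "nu = (\<Sum>j\<in>J. c (Inr (Inr j)) *\<^sub>R axis j 1)"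
    by (simp add: nu_def vec_eq_iff sum_component axis_def if_distrib[of "\<lambda>x. _ * x"] sum.If_cases)
  ultimately have "(\<Sum>i\<in>T <+> (I <+> J). c i *\<^sub>R kkt_generators a M i) =
      (\<Sum>t<n. mu t, red mu lam - nu)"
    using \<open>finite T\<close> mu_sum[of "\<lambda>_ x. x"] mu_sum[of "\<lambda>t x. x *\<^sub>R a t"]
    by (simp add: sum.Plus kkt_generators_def red_def prod_eq_iff fst_sum snd_sum sum_negf)
  with sum have "(\<Sum>t<n. mu t) = 1" "red mu lam = nu" by simp_all
  moreover have "\<forall>t. 0 \<le> mu t \<and> (t \<notin> T \<longrightarrow> mu t = 0)" "vle 0 lam" "vle 0 nu"
    using c by (auto simp: mu_def lam_def nu_def vle_def)
  ultimately show ?thesis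
    by (intro exI[of _ mu] exI[of _ lam]) (auto simp: lam_def nu_def)
qed

lemma kkt_cone_membership_at_maximizer:
  fixes M :: "real^'n^'m" and a :: "nat \<Rightarrow> real^'n"
  assumes "0 < n" and us: "us \<in> nonneg_polyhedron M g"
    and max: "\<And>u. u \<in> nonneg_polyhedron M g \<Longrightarrow> min_affine n k a u \<le> min_affine n k a us"
  shows "(1, 0) \<in> generated_cone
           ({t. t < n \<and> k t - a t \<bullet> us = min_affine n k a us} <+>
            ({i. (M *v us)$i = g$i} <+> {j. us$j = 0})) (kkt_generators a M)"
    (is "_ \<in> generated_cone ?I _")
proof (rule ccontr)
  assume "(1, 0) \<notin> generated_cone ?I (kkt_generators a M)"
  moreover have "finite ?I" by simp
  ultimately obtain z where
    z: "\<forall>i\<in>?I. z \<bullet> kkt_generators a M i \<le> 0" and "0 < z \<bullet> (1, 0)"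
    using farkas_generated_cone by blast
  obtain z0 w where "z = (z0, w)" by fastforce
  show False
  proof (rule no_ascent_direction[OF \<open>0 < n\<close> us max])
    fix t assume "t < n" "k t - a t \<bullet> us = min_affine n k a us"
    then have "z0 + w \<bullet> a t \<le> 0" "0 < z0"
      using z[rule_format, of "Inl t"] \<open>0 < z \<bullet> (1, 0)\<close> \<open>z = (z0, w)\<close>
      by (simp_all add: kkt_generators_def InlI)
    then show "a t \<bullet> w < 0" by (simp add: inner_commute)
  next
    fix i assume "(M *v us)$i = g$i"
    then show "(M *v w)$i \<le> 0"
      using z[rule_format, of "Inr (Inl i)"] \<open>z = (z0, w)\<close>
      by (simp add: kkt_generators_def InrI InlI matrix_vector_mul_component inner_commute)
  next
    fix j assume "us$j = 0"
    then show "0 \<le> w$j"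
      using z[rule_format, of "Inr (Inr j)"] \<open>z = (z0, w)\<close>
      by (simp add: kkt_generators_def InrI inner_axis)
  qed
qed

lemma maxmin_kkt:
  fixes M :: "real^'n^'m" and a :: "nat \<Rightarrow> real^'n" and k :: "nat \<Rightarrow> real"
  assumes "0 < n" "nonneg_polyhedron M g \<noteq> {}" "bounded (nonneg_polyhedron M g)"
  defines "red mu lam \<equiv> transpose M *v lam + (\<Sum>t<n. mu t *\<^sub>R a t)"
  shows "\<exists>u eh lam mu. u \<in> nonneg_polyhedron M g \<and> (\<forall>t<n. eh \<le> k t - a t \<bullet> u) \<and>
           (\<Sum>t<n. mu t) = 1 \<and> (\<forall>t<n. 0 \<le> mu t \<and> mu t * (k t - a t \<bullet> u - eh) = 0) \<and>
           vle 0 lam \<and> (\<forall>i. lam$i * (g - M *v u)$i = 0) \<and>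
           vle 0 (red mu lam) \<and> (\<forall>j. u$j * red mu lam $ j = 0)"
proof -
  obtain us where us: "us \<in> nonneg_polyhedron M g"
    and max: "\<And>u. u \<in> nonneg_polyhedron M g \<Longrightarrow> min_affine n k a u \<le> min_affine n k a us"
    using continuous_attains_sup[OF compact_nonneg_polyhedron[OF assms(3)] assms(2)
        continuous_on_min_affine[OF assms(1)]]
    by blast
  define eh where "eh = min_affine n k a us"
  define T where "T = {t. t < n \<and> k t - a t \<bullet> us = eh}"
  define I where "I = {i. (M *v us)$i = g$i}"
  define J where "J = {j. us$j = 0}"
  have "(1, 0) \<in> generated_cone (T <+> (I <+> J)) (kkt_generators a M)" "T \<subseteq> {..<n}"
    using kkt_cone_membership_at_maximizer[OF \<open>0 < n\<close> us max]
    by (auto simp: T_def I_def J_def eh_def)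
  then obtain mu lam where mu: "(\<Sum>t<n. mu t) = 1" "\<forall>t. 0 \<le> mu t \<and> (t \<notin> T \<longrightarrow> mu t = 0)"
    and lam: "vle 0 lam" "\<forall>i. i \<notin> I \<longrightarrow> lam$i = 0"
    and red: "vle 0 (red mu lam)" "\<forall>j. j \<notin> J \<longrightarrow> red mu lam $ j = 0"
    unfolding red_def by (blast dest: multipliers_of_kkt_cone)
  have "mu t * (k t - a t \<bullet> us - eh) = 0" if "t < n" for t
    using mu(2) that by (cases "t \<in> T") (auto simp: T_def)
  moreover have "lam$i * (g - M *v us)$i = 0" for i
    using lam(2) by (cases "i \<in> I") (auto simp: I_def)
  moreover have "us$j * red mu lam $ j = 0" for j
    using red(2) by (cases "j \<in> J") (auto simp: J_def)
  moreover have "eh \<le> k t - a t \<bullet> us" if "t < n" for t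
    unfolding eh_def using that by (rule min_affine_le)
  ultimately show ?thesis
    using us mu lam red by blast
qed

section \<open>The relaxation\<close>

lemma Uset_eq_nonneg_polyhedron: "Uset F h G x = nonneg_polyhedron (F x) (h + G *v x)"
  by (simp add: Uset_def nonneg_polyhedron_def)

lemma OUset_nonempty:
  assumes "S \<noteq> []" "Uset F h G x \<noteq> {}" "bounded (Uset F h G x)"
  shows "\<exists>u eh lam mu. (u, eh, lam, mu) \<in> OUset F h G B2d d B1 E c2d x S"
proof -
  define a where "a t = transpose E *v snd (S!t)" for t
  define k where "k t = c2d \<bullet> fst (S!t) + (d - B1 *v x - B2d *v fst (S!t)) \<bullet> snd (S!t)" for t
  have val: "c2d \<bullet> fst (S!t) + (d - B1 *v x - E *v u - B2d *v fst (S!t)) \<bullet> snd (S!t)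
      = k t - a t \<bullet> u" for t u
    using dot_lmul_matrix[of "snd (S!t)" E u]
    by (simp add: k_def a_def inner_diff_left inner_commute[of u] inner_commute[of "E *v u"])
  from maxmin_kkt[where n = "length S" and M = "F x" and g = "h + G *v x" and a = a and k = k] assms
  obtain u eh lam mu where "u \<in> nonneg_polyhedron (F x) (h + G *v x)"
    "\<forall>t<length S. eh \<le> k t - a t \<bullet> u" "(\<Sum>t<length S. mu t) = 1"
    "\<forall>t<length S. 0 \<le> mu t \<and> mu t * (k t - a t \<bullet> u - eh) = 0"
    "vle 0 lam" "\<forall>i. lam$i * (h + G *v x - F x *v u)$i = 0"
    "vle 0 (transpose (F x) *v lam + (\<Sum>t<length S. mu t *\<^sub>R a t))"
    "\<forall>j. u$j * (transpose (F x) *v lam + (\<Sum>t<length S. mu t *\<^sub>R a t))$j = 0"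
    by (auto simp: Uset_eq_nonneg_polyhedron)
  then have "(u, eh, lam, mu) \<in> OUset F h G B2d d B1 E c2d x S"
    unfolding OUset_def Let_def val a_def[symmetric] nonneg_polyhedron_def by auto
  then show ?thesis by blast
qed

lemma Yset_iff:
  "(yc, yd) \<in> Yset B2c B2d Yd d B1 E x u \<longleftrightarrow>
     yd \<in> Yd \<and> vle 0 yc \<and> vle (d - B1 *v x - E *v u - B2d *v yd) (B2c *v yc)"
  by (auto simp: Yset_def vle_def algebra_simps)

lemma Yset_attains_min_at_fixed_discrete:
  assumes "(yc0, yd) \<in> Yset B2c B2d Yd d B1 E x u"
    and bounded: "\<And>yc yd. (yc, yd) \<in> Yset B2c B2d Yd d B1 E x u \<Longrightarrow> L \<le> c2c \<bullet> yc + c2d \<bullet> yd"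
  shows "\<exists>yc. (yc, yd) \<in> Yset B2c B2d Yd d B1 E x u \<and>
           (\<forall>yc'. (yc', yd) \<in> Yset B2c B2d Yd d B1 E x u \<longrightarrow> c2c \<bullet> yc \<le> c2c \<bullet> yc')"
proof -
  let ?r = "d - B1 *v x - E *v u - B2d *v yd"
  have "yd \<in> Yd" and feasible: "\<exists>yc. vle 0 yc \<and> vle ?r (B2c *v yc)"
    using assms(1) by (auto simp: Yset_iff)
  have "L - c2d \<bullet> yd \<le> c2c \<bullet> yc" if "vle 0 yc" "vle ?r (B2c *v yc)" for yc
    using bounded[of yc yd] that \<open>yd \<in> Yd\<close> by (simp add: Yset_iff)
  from lp_attains_min[OF feasible this] obtain yc where "vle 0 yc" "vle ?r (B2c *v yc)"
    and "\<forall>yc'. vle 0 yc' \<and> vle ?r (B2c *v yc') \<longrightarrow> c2c \<bullet> yc \<le> c2c \<bullet> yc'"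
    by blast
  with \<open>yd \<in> Yd\<close> show ?thesis
    by (intro exI[of _ yc]) (simp add: Yset_iff)
qed

lemma Yset_attains_min:
  assumes "finite Yd" and nonempty: "Yset B2c B2d Yd d B1 E x u \<noteq> {}"
    and bounded: "\<And>yc yd. (yc, yd) \<in> Yset B2c B2d Yd d B1 E x u \<Longrightarrow> L \<le> c2c \<bullet> yc + c2d \<bullet> yd"
  obtains yc yd where "(yc, yd) \<in> Yset B2c B2d Yd d B1 E x u"
    "\<And>yc' yd'. (yc', yd') \<in> Yset B2c B2d Yd d B1 E x u \<Longrightarrow>
       c2c \<bullet> yc + c2d \<bullet> yd \<le> c2c \<bullet> yc' + c2d \<bullet> yd'"
proof -
  let ?Y = "Yset B2c B2d Yd d B1 E x u"
  define Q where "Q = snd ` ?Y"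
  have "finite Q" "Q \<noteq> {}"
    using \<open>finite Yd\<close> nonempty by (auto simp: Q_def Yset_def intro: finite_subset)
  have "\<forall>yd\<in>Q. \<exists>yc. (yc, yd) \<in> ?Y \<and> (\<forall>yc'. (yc', yd) \<in> ?Y \<longrightarrow> c2c \<bullet> yc \<le> c2c \<bullet> yc')"
  proof
    fix yd assume "yd \<in> Q"
    then obtain yc0 where "(yc0, yd) \<in> ?Y" by (auto simp: Q_def)
    then show "\<exists>yc. (yc, yd) \<in> ?Y \<and> (\<forall>yc'. (yc', yd) \<in> ?Y \<longrightarrow> c2c \<bullet> yc \<le> c2c \<bullet> yc')"
      using bounded by (rule Yset_attains_min_at_fixed_discrete)
  qed
  from bchoice[OF this] obtain opt where
    opt: "\<forall>yd\<in>Q. (opt yd, yd) \<in> ?Y \<and> (\<forall>yc'. (yc', yd) \<in> ?Y \<longrightarrow> c2c \<bullet> opt yd \<le> c2c \<bullet> yc')" ..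
  define f where "f yd = c2c \<bullet> opt yd + c2d \<bullet> yd" for yd
  define yd where "yd = arg_min_on f Q"
  have "yd \<in> Q"
    unfolding yd_def using \<open>finite Q\<close> \<open>Q \<noteq> {}\<close> by (rule arg_min_if_finite(1))
  have min: "f yd \<le> f yd'" if "yd' \<in> Q" for yd'
    unfolding yd_def using \<open>finite Q\<close> \<open>Q \<noteq> {}\<close> that by (rule arg_min_least)
  show ?thesis
  proof (rule that)
    show "(opt yd, yd) \<in> ?Y" using opt \<open>yd \<in> Q\<close> by blast
  next
    fix yc' yd' assume y': "(yc', yd') \<in> ?Y"
    then have "yd' \<in> Q" by (force simp: Q_def)
    then have "f yd \<le> f yd'" by (rule min)
    also have "\<dots> \<le> c2c \<bullet> yc' + c2d \<bullet> yd'" using opt \<open>yd' \<in> Q\<close> y' by (simp add: f_def)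
    finally show "c2c \<bullet> opt yd + c2d \<bullet> yd \<le> c2c \<bullet> yc' + c2d \<bullet> yd'" by (simp add: f_def)
  qed
qed

lemma recourse_cost_lower_bound:
  assumes "Inf {ereal (c1 \<bullet> x + c2c \<bullet> yc + c2d \<bullet> yd) | x u yc yd.
              x \<in> Xset A b Ix \<and> u \<in> Uset F h G x \<and> (yc, yd) \<in> Yset B2c B2d Yd d B1 E x u} > -\<infinity>"
    and "x \<in> Xset A b Ix" "u \<in> Uset F h G x"
  obtains L where "\<And>yc yd. (yc, yd) \<in> Yset B2c B2d Yd d B1 E x u \<Longrightarrow> L \<le> c2c \<bullet> yc + c2d \<bullet> yd"
proof -
  let ?inf = "Inf {ereal (c1 \<bullet> x + c2c \<bullet> yc + c2d \<bullet> yd) | x u yc yd.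
              x \<in> Xset A b Ix \<and> u \<in> Uset F h G x \<and> (yc, yd) \<in> Yset B2c B2d Yd d B1 E x u}"
  obtain m where "ereal m \<le> ?inf"
    using assms(1) by (cases ?inf) auto
  show ?thesis
  proof (rule that)
    fix yc yd assume "(yc, yd) \<in> Yset B2c B2d Yd d B1 E x u"
    with assms(2,3) have "?inf \<le> ereal (c1 \<bullet> x + c2c \<bullet> yc + c2d \<bullet> yd)"
      by (intro Inf_lower) blast
    with \<open>ereal m \<le> ?inf\<close> have "ereal m \<le> ereal (c1 \<bullet> x + c2c \<bullet> yc + c2d \<bullet> yd)"
      by (rule order_trans)
    then show "m - c1 \<bullet> x \<le> c2c \<bullet> yc + c2d \<bullet> yd" by simp
  qed
qed

lemma ereal_le_add_if_le_bounds:
  fixes v s :: ereal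
  assumes "\<And>\<eta>. s \<le> ereal \<eta> \<Longrightarrow> v \<le> ereal (a + \<eta>)"
  shows "v \<le> ereal a + s"
proof (cases s)
  case (real r)
  with assms[of r] show ?thesis by simp
next
  case MInf
  then have "v \<le> ereal B" for B
    using assms[of "B - a"] by simp
  then have "v = -\<infinity>" by (rule ereal_bot)
  then show ?thesis by simp
qed simp

lemma relax_feasible_if_second_stage_le:
  assumes "finite Yd" and U: "Uset F h G x \<noteq> {}" "bounded (Uset F h G x)"
    and standing: "Inf {ereal (c1 \<bullet> x + c2c \<bullet> yc + c2d \<bullet> yd) | x u yc yd.
              x \<in> Xset A b Ix \<and> u \<in> Uset F h G x \<and> (yc, yd) \<in> Yset B2c B2d Yd d B1 E x u} > -\<infinity>"
    and "\<forall>S\<in>SS. S \<noteq> []" and "x \<in> Xset A b Ix"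
    and eta: "second_stage F h G B2c B2d Yd d B1 E c2c c2d x \<le> ereal eta"
  shows "relax_feasible A b Ix F h G B2c B2d Yd d B1 E c2c c2d SS x eta"
  unfolding relax_feasible_def
proof (intro conjI ballI)
  fix S assume "S \<in> SS"
  with assms(5) have "S \<noteq> []" by blast
  from OUset_nonempty[OF this U] obtain u eh lam mu
    where OU: "(u, eh, lam, mu) \<in> OUset F h G B2d d B1 E c2d x S"
    by blast
  then have "u \<in> Uset F h G x" unfolding OUset_def Uset_def Let_def by blast
  let ?Y = "Yset B2c B2d Yd d B1 E x u"
  have "(INF y\<in>?Y. ereal (c2c \<bullet> fst y + c2d \<bullet> snd y)) \<le> ereal eta"
    using SUP_upper[OF \<open>u \<in> Uset F h G x\<close>] eta unfolding second_stage_def by (rule order_trans)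
  then have "?Y \<noteq> {}" by (intro notI) (simp add: top_ereal_def)
  obtain L where "\<And>yc yd. (yc, yd) \<in> ?Y \<Longrightarrow> L \<le> c2c \<bullet> yc + c2d \<bullet> yd"
    using recourse_cost_lower_bound[OF standing \<open>x \<in> Xset A b Ix\<close> \<open>u \<in> Uset F h G x\<close>] by blast
  with \<open>finite Yd\<close> \<open>?Y \<noteq> {}\<close> obtain yc yd where y: "(yc, yd) \<in> ?Y"
    and min: "\<And>yc' yd'. (yc', yd') \<in> ?Y \<Longrightarrow> c2c \<bullet> yc + c2d \<bullet> yd \<le> c2c \<bullet> yc' + c2d \<bullet> yd'"
    by (rule Yset_attains_min) auto
  have "ereal (c2c \<bullet> yc + c2d \<bullet> yd) \<le> (INF y\<in>?Y. ereal (c2c \<bullet> fst y + c2d \<bullet> snd y))"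
    using min by (auto intro!: INF_greatest)
  also have "\<dots> \<le> ereal eta" by fact
  finally have "c2c \<bullet> yc + c2d \<bullet> yd \<le> eta" by simp
  moreover have "vle 0 yc" "yd \<in> Yd" "vle (d - B1 *v x) (B2c *v yc + B2d *v yd + E *v u)"
    using y unfolding Yset_iff vle_def by (auto simp: algebra_simps)
  ultimately show "\<exists>yc yd u eh lam mu. vle 0 yc \<and> yd \<in> Yd \<and> c2c \<bullet> yc + c2d \<bullet> yd \<le> eta \<and>
      vle (d - B1 *v x) (B2c *v yc + B2d *v yd + E *v u) \<and>
      (u, eh, lam, mu) \<in> OUset F h G B2d d B1 E c2d x S"
    using OU by blast
qed (rule \<open>x \<in> Xset A b Ix\<close>)

theorem corollary24:
  fixes A :: "real^'x^'mA" and b :: "real^'mA" and Ix :: "'x set" and c1 :: "real^'x"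
    and F :: "real^'x \<Rightarrow> real^'u^'mF" and h :: "real^'mF" and G :: "real^'x^'mF"
    and B2c :: "real^'yc^'m2" and B2d :: "real^'yd^'m2" and Yd :: "(real^'yd) set"
    and d :: "real^'m2" and B1 :: "real^'x^'m2" and E :: "real^'u^'m2"
    and c2c :: "real^'yc" and c2d :: "real^'yd"
    and SS :: "(((real^'yd) \<times> (real^'m2)) list) set"
  assumes Yd_fin: "finite Yd"
    and Yd_int: "\<forall>y\<in>Yd. \<forall>i. y$i \<in> \<int> \<and> 0 \<le> y$i"
    and U_ok: "\<forall>x\<in>Xset A b Ix. Uset F h G x \<noteq> {} \<and> bounded (Uset F h G x)"
    and standing: "Inf {ereal (c1 \<bullet> x + c2c \<bullet> yc + c2d \<bullet> yd) | x u yc yd.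
                      x \<in> Xset A b Ix \<and> u \<in> Uset F h G x \<and>
                      (yc, yd) \<in> Yset B2c B2d Yd d B1 E x u} > -\<infinity>"
    and SS_ok: "\<forall>S\<in>SS. admissible_coll Yd B2c c2c S"
  shows "(\<forall>x\<in>Xset A b Ix. \<forall>eta. second_stage F h G B2c B2d Yd d B1 E c2c c2d x \<le> ereal eta
            \<longrightarrow> relax_feasible A b Ix F h G B2c B2d Yd d B1 E c2c c2d SS x eta)
       \<and> relax_value A b Ix c1 F h G B2c B2d Yd d B1 E c2c c2d SS
           \<le> wstar A b Ix c1 F h G B2c B2d Yd d B1 E c2c c2d"
proof -
  have nonempty: "\<forall>S\<in>SS. S \<noteq> []"
    using SS_ok by (simp add: admissible_coll_def)
  have feasible: "\<forall>x\<in>Xset A b Ix. \<forall>eta. second_stage F h G B2c B2d Yd d B1 E c2c c2d x \<le> ereal eta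
      \<longrightarrow> relax_feasible A b Ix F h G B2c B2d Yd d B1 E c2c c2d SS x eta"
    using relax_feasible_if_second_stage_le[OF Yd_fin _ _ standing nonempty] U_ok by blast
  have "relax_value A b Ix c1 F h G B2c B2d Yd d B1 E c2c c2d SS
      \<le> ereal (c1 \<bullet> x) + second_stage F h G B2c B2d Yd d B1 E c2c c2d x"
    if "x \<in> Xset A b Ix" for x
  proof (rule ereal_le_add_if_le_bounds)
    fix eta assume "second_stage F h G B2c B2d Yd d B1 E c2c c2d x \<le> ereal eta"
    with feasible that
    show "relax_value A b Ix c1 F h G B2c B2d Yd d B1 E c2c c2d SS \<le> ereal (c1 \<bullet> x + eta)"
      unfolding relax_value_def by (intro Inf_lower) blast
  qed
  then have "relax_value A b Ix c1 F h G B2c B2d Yd d B1 E c2c c2d SS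
      \<le> wstar A b Ix c1 F h G B2c B2d Yd d B1 E c2c c2d"
    unfolding wstar_def by (rule INF_greatest)
  with feasible show ?thesis by blast
qed

end
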